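(* Let $\Gamma$ be a graph with discriminant $P$ and let $x,y$ be vertices of $\Gamma$. If perfect state transfer occurs from $d^*e_x$ to $d^*e_y$ at time $\tau$, then $2\lambda$ is an algebraic integer for every $\lambda\in\Theta_P(e_x)$.
   Context: All graphs are finite and simple. For $\Gamma$ with symmetric arc set $\mathcal{A}$ ($t((x,y))=y$, $(x,y)^{-1}=(y,x)$): boundary matrix $d_{x,a}=\frac{1}{\sqrt{\deg x}}\delta_{x,t(a)}$, shift matrix $R_{a,b}=\delta_{a,b^{-1}}$, $U=R(2d^*d-I_{\mathcal{A}})$, discriminant $P=dRd^*$. Perfect state transfer from $\Phi$ to a distinct state $\Psi$ at time $\tau\in\mathbb{Z}_{\ge1}$ means $U^\tau\Phi=\gamma\Psi$ for some $|\gamma|=1$. For the spectral decomposition $P=\sum_\lambda\lambda E_\lambda$ (orthogonal eigenprojections), $\Theta_P(e_x)=\{\lambda\mid E_\lambda e_x\ne0\}$. *)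

theory Defs
  imports Complex_Main "HOL-Computational_Algebra.Polynomial"
begin

definition simple_graph :: "'v set \<Rightarrow> ('v \<Rightarrow> 'v \<Rightarrow> bool) \<Rightarrow> bool" where
  "simple_graph V E \<longleftrightarrow> finite V \<and> (\<forall>x y. E x y \<longrightarrow> x \<in> V \<and> y \<in> V)
     \<and> (\<forall>x y. E x y \<longrightarrow> E y x) \<and> (\<forall>x. \<not> E x x)"

text \<open>Symmetric arc set; an arc a = (x,y) has terminus t(a) = snd a, inverse (y,x).\<close>
definition arcs :: "'v set \<Rightarrow> ('v \<Rightarrow> 'v \<Rightarrow> bool) \<Rightarrow> ('v \<times> 'v) set" where
  "arcs V E = {(x, y). x \<in> V \<and> y \<in> V \<and> E x y}"

definition deg :: "'v set \<Rightarrow> ('v \<Rightarrow> 'v \<Rightarrow> bool) \<Rightarrow> 'v \<Rightarrow> nat" where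
  "deg V E x = card {y \<in> V. E x y}"

definition bdry :: "'v set \<Rightarrow> ('v \<Rightarrow> 'v \<Rightarrow> bool) \<Rightarrow> 'v \<Rightarrow> 'v \<times> 'v \<Rightarrow> real" where
  "bdry V E x a = (if x = snd a then 1 / sqrt (real (deg V E x)) else 0)"

definition shift :: "'v \<times> 'v \<Rightarrow> 'v \<times> 'v \<Rightarrow> real" where
  "shift a b = (if a = prod.swap b then 1 else 0)"

text \<open>Time evolution matrix U = R (2 d^* d - I) (indexed by arcs).\<close>
definition Umat :: "'v set \<Rightarrow> ('v \<Rightarrow> 'v \<Rightarrow> bool) \<Rightarrow> 'v \<times> 'v \<Rightarrow> 'v \<times> 'v \<Rightarrow> real" where
  "Umat V E a b = (\<Sum>c\<in>arcs V E. shift a c *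
      (2 * (\<Sum>z\<in>V. bdry V E z c * bdry V E z b) - (if c = b then 1 else 0)))"

definition Uact :: "'v set \<Rightarrow> ('v \<Rightarrow> 'v \<Rightarrow> bool) \<Rightarrow> ('v \<times> 'v \<Rightarrow> complex) \<Rightarrow> ('v \<times> 'v \<Rightarrow> complex)" where
  "Uact V E f = (\<lambda>a. if a \<in> arcs V E then (\<Sum>b\<in>arcs V E. complex_of_real (Umat V E a b) * f b) else 0)"

definition evec :: "'v \<Rightarrow> 'v \<Rightarrow> real" where
  "evec x = (\<lambda>z. if z = x then 1 else 0)"

definition dstar_e :: "'v set \<Rightarrow> ('v \<Rightarrow> 'v \<Rightarrow> bool) \<Rightarrow> 'v \<Rightarrow> ('v \<times> 'v \<Rightarrow> complex)" where
  "dstar_e V E x = (\<lambda>a. if a \<in> arcs V E then complex_of_real (bdry V E x a) else 0)"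

definition pst :: "'v set \<Rightarrow> ('v \<Rightarrow> 'v \<Rightarrow> bool) \<Rightarrow> ('v \<times> 'v \<Rightarrow> complex) \<Rightarrow> ('v \<times> 'v \<Rightarrow> complex) \<Rightarrow> nat \<Rightarrow> bool" where
  "pst V E \<Phi> \<Psi> \<tau> \<longleftrightarrow> \<Phi> \<noteq> \<Psi> \<and> \<tau> \<ge> 1 \<and>
     (\<exists>\<gamma>. cmod \<gamma> = 1 \<and> (Uact V E ^^ \<tau>) \<Phi> = (\<lambda>a. \<gamma> * \<Psi> a))"

text \<open>Discriminant P = d R d^* (indexed by vertices) and its action on vectors over V.\<close>
definition discr :: "'v set \<Rightarrow> ('v \<Rightarrow> 'v \<Rightarrow> bool) \<Rightarrow> 'v \<Rightarrow> 'v \<Rightarrow> real" where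
  "discr V E x y = (\<Sum>a\<in>arcs V E. \<Sum>b\<in>arcs V E. bdry V E x a * shift a b * bdry V E y b)"

definition Pact :: "'v set \<Rightarrow> ('v \<Rightarrow> 'v \<Rightarrow> bool) \<Rightarrow> ('v \<Rightarrow> real) \<Rightarrow> ('v \<Rightarrow> real)" where
  "Pact V E f = (\<lambda>x. if x \<in> V then (\<Sum>y\<in>V. discr V E x y * f y) else 0)"

definition vinner :: "'v set \<Rightarrow> ('v \<Rightarrow> real) \<Rightarrow> ('v \<Rightarrow> real) \<Rightarrow> real" where
  "vinner V f g = (\<Sum>x\<in>V. f x * g x)"

text \<open>Eigenspace of P for lambda (trivial if lambda is not an eigenvalue).\<close>
definition eigsp :: "'v set \<Rightarrow> ('v \<Rightarrow> 'v \<Rightarrow> bool) \<Rightarrow> real \<Rightarrow> ('v \<Rightarrow> real) set" where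
  "eigsp V E \<mu> = {f. (\<forall>x. x \<notin> V \<longrightarrow> f x = 0) \<and> Pact V E f = (\<lambda>x. \<mu> * f x)}"

definition eigproj :: "'v set \<Rightarrow> ('v \<Rightarrow> 'v \<Rightarrow> bool) \<Rightarrow> real \<Rightarrow> ('v \<Rightarrow> real) \<Rightarrow> ('v \<Rightarrow> real)" where
  "eigproj V E \<mu> v = (THE w. w \<in> eigsp V E \<mu> \<and> (\<forall>u\<in>eigsp V E \<mu>. vinner V (\<lambda>z. v z - w z) u = 0))"

definition Theta :: "'v set \<Rightarrow> ('v \<Rightarrow> 'v \<Rightarrow> bool) \<Rightarrow> 'v \<Rightarrow> real set" where
  "Theta V E x = {\<mu>. eigproj V E \<mu> (evec x) \<noteq> (\<lambda>_. 0)}"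

end

(*
  Write w = E_mu e_x, which is nonzero by assumption.  If mu is 0 or +-1 then 2 mu is an
  integer, so assume otherwise.  Then w vanishes on isolated vertices, and the plane spanned by
  F = d^* w and G = R d^* w is invariant under U (U F = G, U G = 2 mu G - F) and under U^*; the
  Gram matrix of F, G is |w|^2 [1 mu; mu 1], so F and G are independent.  Since e_x - w is
  orthogonal to the eigenspace, d^* e_x and F have the same inner products with this plane,
  while H = G - mu F is orthogonal to every d^* f, in particular to d^* e_y.  Perfect state
  transfer therefore gives <U^tau F, H> = <U^tau d^* e_x, H> = 0, which forces U^tau to be a
  scalar a on the plane.  Both eigenvalues z, 1/z of U there (z + 1/z = 2 mu) then satisfy
  z^tau = a = z^-tau, so z^(2 tau) = 1, and 2 mu = z + 1/z is a root of the monic integer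
  polynomial D_(2 tau) - 2, where D_k is the Dickson polynomial, D_k(z + 1/z) = z^k + z^-k.
*)
theory Submission
  imports Defs
begin

lemma vinner_diff_left: "vinner V (\<lambda>z. f z - g z) h = vinner V f h - vinner V g h"
  by (simp add: vinner_def sum_subtractf algebra_simps)

lemma vinner_lincomb_left: "vinner V (\<lambda>z. f z + c * g z) h = vinner V f h + c * vinner V g h"
  by (simp add: vinner_def sum.distrib sum_distrib_left algebra_simps)

lemma vinner_lincomb_right: "vinner V h (\<lambda>z. f z + c * g z) = vinner V h f + c * vinner V h g"
  by (simp add: vinner_def sum.distrib sum_distrib_left algebra_simps)

lemma vinner_scale_right: "vinner V h (\<lambda>z. c * f z) = c * vinner V h f"
  by (simp add: vinner_def sum_distrib_left algebra_simps)

lemma vinner_commute: "vinner V f g = vinner V g f"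
  by (simp add: vinner_def mult.commute)

lemma vinner_evec: "finite V \<Longrightarrow> x \<in> V \<Longrightarrow> vinner V (evec x) g = g x"
  by (simp add: vinner_def evec_def if_distrib[of "\<lambda>c. c * _"] cong: if_cong)

lemma vinner_self_pos:
  assumes "finite V" and "\<And>z. z \<notin> V \<Longrightarrow> f z = 0" and "f \<noteq> (\<lambda>_. 0)"
  shows "vinner V f f > 0"
proof -
  obtain z where "f z \<noteq> 0" using assms(3) by auto
  moreover from this have "z \<in> V" using assms(2) by auto
  ultimately show ?thesis
    unfolding vinner_def using assms(1) by (intro sum_pos2) (auto simp: zero_less_mult_iff)
qed

definition supported_subspace :: "'v set \<Rightarrow> ('v \<Rightarrow> real) set \<Rightarrow> bool" where
  "supported_subspace X S \<longleftrightarrow> (\<lambda>_. 0) \<in> S \<and> (\<forall>f\<in>S. \<forall>g\<in>S. \<forall>c. (\<lambda>z. f z + c * g z) \<in> S)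
     \<and> (\<forall>f\<in>S. \<forall>z. z \<notin> X \<longrightarrow> f z = 0)"

lemma supported_subspace_lincomb:
  "supported_subspace X S \<Longrightarrow> f \<in> S \<Longrightarrow> g \<in> S \<Longrightarrow> (\<lambda>z. f z + c * g z) \<in> S"
  unfolding supported_subspace_def by blast

lemma supported_subspace_scale:
  assumes "supported_subspace X S" and "f \<in> S"
  shows "(\<lambda>z. c * f z) \<in> S"
  using supported_subspace_lincomb[OF assms(1) _ assms(2), of "\<lambda>_. 0"] assms(1)
  by (simp add: supported_subspace_def)

lemma orthogonal_projection_extend:
  assumes S: "supported_subspace X S" and "S' \<subseteq> S"
    and proj': "\<And>v. \<exists>w\<in>S'. \<forall>u\<in>S'. vinner V (\<lambda>z. v z - w z) u = 0"
    and s: "s \<in> S" "\<forall>u\<in>S'. vinner V s u = 0" "vinner V s s \<noteq> 0"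
    and decomp: "\<And>u. u \<in> S \<Longrightarrow> \<exists>c. (\<lambda>z. u z - c * s z) \<in> S'"
  shows "\<exists>w\<in>S. \<forall>u\<in>S. vinner V (\<lambda>z. v z - w z) u = 0"
proof -
  obtain p where p: "p \<in> S'" "\<forall>u\<in>S'. vinner V (\<lambda>z. v z - p z) u = 0"
    using proj' by blast
  define c where "c = vinner V v s / vinner V s s"
  define w where "w = (\<lambda>z. p z + c * s z)"
  have "w \<in> S"
    unfolding w_def using S p(1) s(1) \<open>S' \<subseteq> S\<close> by (blast intro: supported_subspace_lincomb)
  moreover have "vinner V (\<lambda>z. v z - w z) u = 0" if u: "u \<in> S" for u
  proof -
    obtain d where u': "(\<lambda>z. u z - d * s z) \<in> S'" using decomp[OF u] by blast
    have residual: "(\<lambda>z. v z - w z) = (\<lambda>z. (v z - p z) + (- c) * s z)"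
      by (simp add: w_def algebra_simps)
    have "vinner V p s = 0" using s(2) p(1) by (simp add: vinner_commute)
    then have orth_s: "vinner V (\<lambda>z. v z - w z) s = 0"
      unfolding residual vinner_lincomb_left vinner_diff_left c_def using s(3) by simp
    have "vinner V (\<lambda>z. v z - w z) (\<lambda>z. u z - d * s z) = 0"
      unfolding residual vinner_lincomb_left using p(2) s(2) u' by simp
    then show ?thesis
      using orth_s vinner_lincomb_right[of V "\<lambda>z. v z - w z" "\<lambda>z. u z - d * s z" d s] by simp
  qed
  ultimately show ?thesis by blast
qed

text \<open>Induction on the support: the functions in \<open>S\<close> vanishing at the new point form a
  subspace of codimension at most one.\<close>
lemma orthogonal_projection_exists:
  assumes "finite V" and "finite X" and "X \<subseteq> V" and "supported_subspace X S"
  shows "\<exists>w\<in>S. \<forall>u\<in>S. vinner V (\<lambda>z. v z - w z) u = 0"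
  using assms(2-)
proof (induction X arbitrary: S v rule: finite_induct)
  case empty
  then have "S = {\<lambda>_. 0}" by (auto simp: supported_subspace_def)
  then show ?case by (simp add: vinner_def)
next
  case (insert x X)
  define S' where "S' = {f \<in> S. f x = 0}"
  have "supported_subspace X S'"
    using insert.prems(2) unfolding S'_def supported_subspace_def by auto
  then have proj': "\<exists>w\<in>S'. \<forall>u\<in>S'. vinner V (\<lambda>z. v z - w z) u = 0" for v
    using insert.prems(1) by (intro insert.IH) auto
  show ?case
  proof (cases "\<forall>f\<in>S. f x = 0")
    case True
    then have "S' = S" by (auto simp: S'_def)
    then show ?thesis using proj' by simp
  next
    case False
    then obtain f where "f \<in> S" "f x \<noteq> 0" by blast
    define s0 where "s0 = (\<lambda>z. inverse (f x) * f z)"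
    have s0: "s0 \<in> S" "s0 x = 1"
      using supported_subspace_scale[OF insert.prems(2) \<open>f \<in> S\<close>] \<open>f x \<noteq> 0\<close>
      by (simp_all add: s0_def)
    obtain p where p: "p \<in> S'" "\<forall>u\<in>S'. vinner V (\<lambda>z. s0 z - p z) u = 0"
      using proj' by blast
    define s where "s = (\<lambda>z. s0 z + (- 1) * p z)"
    have "s \<in> S" using s0(1) p(1) insert.prems(2)
      unfolding s_def S'_def by (blast intro: supported_subspace_lincomb)
    have "s x = 1" using s0 p(1) by (simp add: s_def S'_def)
    have orth: "\<forall>u\<in>S'. vinner V s u = 0" using p(2) by (simp add: s_def)
    have "S' \<subseteq> S" by (auto simp: S'_def)
    have "vinner V s s \<ge> s x * s x"
      unfolding vinner_def using insert.prems(1) \<open>finite V\<close>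
      by (intro member_le_sum) auto
    then have "vinner V s s \<noteq> 0" using \<open>s x = 1\<close> by simp
    moreover have "\<exists>c. (\<lambda>z. u z - c * s z) \<in> S'" if "u \<in> S" for u
      using supported_subspace_lincomb[OF insert.prems(2) that \<open>s \<in> S\<close>, of "- u x"]
        \<open>s x = 1\<close> by (auto simp: S'_def)
    ultimately show ?thesis
      by (rule orthogonal_projection_extend[OF insert.prems(2) \<open>S' \<subseteq> S\<close> proj' \<open>s \<in> S\<close> orth])
  qed
qed

lemma orthogonal_projection_unique:
  assumes "finite V" and S: "supported_subspace V S"
    and w1: "w1 \<in> S" "\<forall>u\<in>S. vinner V (\<lambda>z. v z - w1 z) u = 0"
    and w2: "w2 \<in> S" "\<forall>u\<in>S. vinner V (\<lambda>z. v z - w2 z) u = 0"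
  shows "w1 = w2"
proof (rule ccontr)
  define d where "d = (\<lambda>z. w1 z + (- 1) * w2 z)"
  assume "w1 \<noteq> w2"
  then have "d \<noteq> (\<lambda>_. 0)" by (auto simp: d_def fun_eq_iff)
  moreover have "d \<in> S" using S w1(1) w2(1) unfolding d_def by (rule supported_subspace_lincomb)
  then have "\<And>z. z \<notin> V \<Longrightarrow> d z = 0" using S by (auto simp: supported_subspace_def)
  ultimately have "vinner V d d > 0" using \<open>finite V\<close> by (intro vinner_self_pos)
  moreover have "vinner V d d = vinner V (\<lambda>z. v z - w2 z) d - vinner V (\<lambda>z. v z - w1 z) d"
    by (simp add: d_def vinner_def sum_subtractf[symmetric] algebra_simps)
  then have "vinner V d d = 0" using w1(2) w2(2) \<open>d \<in> S\<close> by simp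
  ultimately show False by simp
qed

lemma Pact_lincomb: "Pact V E (\<lambda>z. f z + c * g z) = (\<lambda>z. Pact V E f z + c * Pact V E g z)"
  unfolding Pact_def by (rule ext) (simp add: sum.distrib sum_distrib_left algebra_simps)

lemma supported_subspace_eigsp: "supported_subspace V (eigsp V E \<mu>)"
proof -
  have "Pact V E (\<lambda>_. 0) = (\<lambda>_. 0)" by (rule ext) (simp add: Pact_def)
  then show ?thesis
    unfolding supported_subspace_def eigsp_def by (auto simp: Pact_lincomb fun_eq_iff algebra_simps)
qed

lemma eigproj_spec:
  assumes "finite V"
  shows "eigproj V E \<mu> v \<in> eigsp V E \<mu>"
    and "\<forall>u\<in>eigsp V E \<mu>. vinner V (\<lambda>z. v z - eigproj V E \<mu> v z) u = 0"
proof -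
  have "\<exists>!w. w \<in> eigsp V E \<mu> \<and> (\<forall>u\<in>eigsp V E \<mu>. vinner V (\<lambda>z. v z - w z) u = 0)"
    using orthogonal_projection_exists[OF assms assms subset_refl supported_subspace_eigsp]
      orthogonal_projection_unique[OF assms supported_subspace_eigsp]
    by blast
  then have "eigproj V E \<mu> v \<in> eigsp V E \<mu> \<and>
      (\<forall>u\<in>eigsp V E \<mu>. vinner V (\<lambda>z. v z - eigproj V E \<mu> v z) u = 0)"
    unfolding eigproj_def by (rule theI')
  then show "eigproj V E \<mu> v \<in> eigsp V E \<mu>"
    and "\<forall>u\<in>eigsp V E \<mu>. vinner V (\<lambda>z. v z - eigproj V E \<mu> v z) u = 0"
    by blast+
qed

fun dickson :: "nat \<Rightarrow> 'a::comm_ring_1 poly" where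
  "dickson 0 = [:2:]"
| "dickson (Suc 0) = [:0, 1:]"
| "dickson (Suc (Suc k)) = pCons 0 (dickson (Suc k)) - dickson k"

lemma coeff_dickson_Ints: "coeff (dickson k) i \<in> \<int>"
proof (induction k arbitrary: i rule: dickson.induct)
  case (3 k)
  then show ?case by (cases i) (auto simp: coeff_diff)
qed (auto simp: coeff_pCons split: nat.splits)

lemma degree_dickson_le: "degree (dickson k) \<le> k"
  by (induction k rule: dickson.induct)
     (auto intro!: degree_diff_le order.trans[OF degree_pCons_le])

lemma coeff_dickson_top: "coeff (dickson k :: 'a::comm_ring_1 poly) k = (if k = 0 then 2 else 1)"
proof (induction k rule: dickson.induct)
  case (3 k)
  have "coeff (dickson k :: 'a poly) (Suc (Suc k)) = 0"
    by (rule coeff_eq_0) (use degree_dickson_le[of k, where 'a = 'a] in linarith)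
  with 3 show ?case by (simp add: coeff_diff)
qed simp_all

lemma degree_dickson: "k > 0 \<Longrightarrow> degree (dickson k :: 'a::comm_ring_1 poly) = k"
  using coeff_dickson_top[of k, where 'a = 'a] le_degree[of "dickson k :: 'a poly" k]
    degree_dickson_le[of k, where 'a = 'a]
  by (simp add: le_antisym)

lemma poly_dickson_add_inverse:
  fixes z :: "'a::field"
  assumes "z \<noteq> 0"
  shows "poly (dickson k) (z + inverse z) = z ^ k + inverse z ^ k"
proof (induction k rule: dickson.induct)
  case (3 k)
  have "(z + inverse z) * (z ^ Suc k + inverse z ^ Suc k)
      = z ^ Suc (Suc k) + inverse z ^ Suc (Suc k) + (z * inverse z) * (z ^ k + inverse z ^ k)"
    by (simp add: algebra_simps)
  with 3 assms show ?case by simp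
qed simp_all

lemma algebraic_int_add_inverse_root_of_unity:
  fixes z :: "'a::field"
  assumes "z ^ n = 1" and "n > 0"
  shows "algebraic_int (z + inverse z)"
proof (rule algebraic_int_root)
  have "z \<noteq> 0" using assms by (cases n) auto
  then show "poly (dickson n) (z + inverse z) = 2"
    using assms(1) by (simp add: poly_dickson_add_inverse power_inverse)
qed (use assms in \<open>auto simp: coeff_dickson_Ints coeff_dickson_top degree_dickson\<close>)

lemma funpow_lincomb:
  fixes T :: "('b \<Rightarrow> complex) \<Rightarrow> 'b \<Rightarrow> complex"
  assumes lin: "\<And>c d f g. T (\<lambda>e. c * f e + d * g e) = (\<lambda>e. c * T f e + d * T g e)"
  shows "(T ^^ k) (\<lambda>e. c * f e + d * g e) = (\<lambda>e. c * (T ^^ k) f e + d * (T ^^ k) g e)"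
  by (induction k) (simp_all add: lin)

lemma funpow_invariant_pair:
  fixes T :: "('b \<Rightarrow> complex) \<Rightarrow> 'b \<Rightarrow> complex"
  assumes lin: "\<And>c d f g. T (\<lambda>e. c * f e + d * g e) = (\<lambda>e. c * T f e + d * T g e)"
    and TF: "T F = (\<lambda>e. a1 * F e + b1 * G e)" and TG: "T G = (\<lambda>e. a2 * F e + b2 * G e)"
  shows "\<exists>p q. (T ^^ k) (\<lambda>e. c * F e + d * G e) = (\<lambda>e. p * F e + q * G e)"
proof (induction k arbitrary: c d)
  case (Suc k)
  have "T (\<lambda>e. c * F e + d * G e) = (\<lambda>e. (c * a1 + d * a2) * F e + (c * b1 + d * b2) * G e)"
    unfolding lin TF TG by (simp add: fun_eq_iff algebra_simps)
  then show ?case using Suc.IH by (simp only: funpow_Suc_right o_apply)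
qed auto

text \<open>For a root \<open>z\<close> of \<open>X\<^sup>2 - 2 m X + 1\<close>, \<open>G - F / z\<close> is an eigenvector of \<open>T\<close> for
  \<open>z\<close>, nonzero by independence.\<close>
lemma eigenvalue_pow_eq_scalar:
  fixes T :: "('b \<Rightarrow> complex) \<Rightarrow> 'b \<Rightarrow> complex"
  assumes lin: "\<And>c d f g. T (\<lambda>e. c * f e + d * g e) = (\<lambda>e. c * T f e + d * T g e)"
    and TF: "T F = G" and TG: "T G = (\<lambda>e. (- 1) * F e + (2 * m) * G e)"
    and indep: "\<And>c d. (\<lambda>e. c * F e + d * G e) = (\<lambda>_. 0) \<Longrightarrow> c = 0 \<and> d = 0"
    and scalar: "(T ^^ k) F = (\<lambda>e. a * F e)"
    and root: "z * z - 2 * m * z + 1 = 0"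
  shows "z ^ k = a"
proof -
  have "z \<noteq> 0" using root by auto
  define v where "v = (\<lambda>e. - inverse z * F e + 1 * G e)"
  have "T v = (\<lambda>e. z * v e)"
  proof -
    have "2 * m - inverse z = z"
      using root \<open>z \<noteq> 0\<close> by (simp add: field_simps)
    then show ?thesis
      unfolding v_def lin TF TG using \<open>z \<noteq> 0\<close>
      by (auto simp: fun_eq_iff algebra_simps)
  qed
  then have "(T ^^ k) v = (\<lambda>e. z ^ k * v e)"
  proof (induction k)
    case (Suc k)
    have "(T ^^ Suc k) v = T (\<lambda>e. z ^ k * v e)" using Suc by simp
    also have "\<dots> = (\<lambda>e. z ^ k * T v e)" using lin[where d = 0] by simp
    finally show ?case using Suc.prems by (simp add: ac_simps)
  qed simp
  moreover have "(T ^^ k) G = T ((T ^^ k) F)"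
    unfolding TF[symmetric] by (rule funpow_swap1[symmetric])
  then have "(T ^^ k) G = (\<lambda>e. a * G e)"
    using lin[where d = 0] by (simp add: scalar TF)
  then have "(T ^^ k) v = (\<lambda>e. a * v e)"
    unfolding v_def funpow_lincomb[OF lin] scalar by (simp add: fun_eq_iff algebra_simps)
  moreover obtain e where "v e \<noteq> 0"
    using indep[of "- inverse z" 1] unfolding v_def by force
  ultimately show ?thesis by (metis mult_cancel_right)
qed

lemma invariant_pair_root_of_unity:
  fixes T :: "('b \<Rightarrow> complex) \<Rightarrow> 'b \<Rightarrow> complex"
  assumes lin: "\<And>c d f g. T (\<lambda>e. c * f e + d * g e) = (\<lambda>e. c * T f e + d * T g e)"
    and TF: "T F = G" and TG: "T G = (\<lambda>e. (- 1) * F e + (2 * m) * G e)"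
    and indep: "\<And>c d. (\<lambda>e. c * F e + d * G e) = (\<lambda>_. 0) \<Longrightarrow> c = 0 \<and> d = 0"
    and scalar: "(T ^^ k) F = (\<lambda>e. a * F e)"
  obtains z where "z + inverse z = 2 * m" and "z ^ (2 * k) = 1"
proof
  define z where "z = m + csqrt (m * m - 1)"
  have root: "z * z - 2 * m * z + 1 = 0"
    using power2_csqrt[of "m * m - 1"] by (simp add: z_def power2_eq_square algebra_simps)
  then have "z \<noteq> 0" by auto
  have root_inverse: "inverse z * inverse z - 2 * m * inverse z + 1 = 0"
    using root \<open>z \<noteq> 0\<close> by (simp add: field_simps)
  show "z + inverse z = 2 * m"
    using root \<open>z \<noteq> 0\<close> by (simp add: field_simps)
  have "z ^ (2 * k) = z ^ k * inverse z ^ k"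
    using eigenvalue_pow_eq_scalar[OF lin TF TG indep scalar root]
      eigenvalue_pow_eq_scalar[OF lin TF TG indep scalar root_inverse]
    by (simp add: mult_2 power_add)
  also have "\<dots> = 1"
    using \<open>z \<noteq> 0\<close> by (simp add: power_mult_distrib[symmetric])
  finally show "z ^ (2 * k) = 1" .
qed

locale grover_walk =
  fixes V :: "'v set" and E :: "'v \<Rightarrow> 'v \<Rightarrow> bool"
  assumes simple_graph: "simple_graph V E"
begin

abbreviation "A \<equiv> arcs V E"
abbreviation "dg v \<equiv> real (deg V E v)"
abbreviation "sq v \<equiv> sqrt (real (deg V E v))"

lemma finite_V: "finite V" and E_sym: "E u v \<Longrightarrow> E v u" and E_in_V: "E u v \<Longrightarrow> u \<in> V \<and> v \<in> V"
  using simple_graph by (auto simp: simple_graph_def)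

lemma arcs_iff: "a \<in> A \<longleftrightarrow> fst a \<in> V \<and> snd a \<in> V \<and> E (fst a) (snd a)"
  by (cases a) (simp add: arcs_def)

lemma finite_arcs: "finite A"
  using finite_subset[of A "V \<times> V"] finite_V by (auto simp: arcs_def)

lemma swap_in_arcs_iff [simp]: "prod.swap a \<in> A \<longleftrightarrow> a \<in> A"
  using E_sym by (cases a) (auto simp: arcs_def)

lemma deg_conv_in_neighbours: "deg V E v = card {u \<in> V. E u v}"
  unfolding deg_def using E_sym by metis

lemma deg_pos: "E u v \<Longrightarrow> deg V E v > 0"
  unfolding deg_conv_in_neighbours using finite_V E_in_V by (auto simp: card_gt_0_iff)

lemma sum_arcs: "(\<Sum>a\<in>A. \<phi> a) = (\<Sum>u\<in>V. \<Sum>v\<in>V. if E u v then \<phi> (u, v) else 0)"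
proof -
  have "(\<Sum>a\<in>A. \<phi> a) = (\<Sum>a\<in>V \<times> V. if a \<in> A then \<phi> a else 0)"
    using finite_V by (intro sum.mono_neutral_cong_left) (auto simp: arcs_def split: if_splits)
  also have "\<dots> = (\<Sum>u\<in>V. \<Sum>v\<in>V. if E u v then \<phi> (u, v) else 0)"
    unfolding sum.cartesian_product by (rule sum.cong) (auto simp: arcs_def split: if_splits)
  finally show ?thesis .
qed

lemma sum_in_neighbours_const: "(\<Sum>u\<in>V. if E u v then c else 0) = of_nat (deg V E v) * c"
  using finite_V by (simp add: sum.inter_filter[symmetric] deg_conv_in_neighbours)

definition dstar :: "('v \<Rightarrow> real) \<Rightarrow> 'v \<times> 'v \<Rightarrow> complex" where
  "dstar h a = (if a \<in> A then of_real (h (snd a) / sq (snd a)) else 0)"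

definition shift_dstar :: "('v \<Rightarrow> real) \<Rightarrow> 'v \<times> 'v \<Rightarrow> complex" where
  "shift_dstar h = (\<lambda>a. dstar h (prod.swap a))"

definition Uadj :: "('v \<times> 'v \<Rightarrow> complex) \<Rightarrow> 'v \<times> 'v \<Rightarrow> complex" where
  "Uadj g b = (if b \<in> A then (\<Sum>a\<in>A. of_real (Umat V E a b) * g a) else 0)"

definition arc_inner :: "('v \<times> 'v \<Rightarrow> complex) \<Rightarrow> ('v \<times> 'v \<Rightarrow> complex) \<Rightarrow> complex" where
  "arc_inner f g = (\<Sum>a\<in>A. f a * cnj (g a))"

lemma dstar_e_eq: "dstar_e V E x = dstar (evec x)"
  unfolding dstar_e_def dstar_def bdry_def evec_def by (rule ext) auto

lemma shift_dstar_apply: "a \<in> A \<Longrightarrow> shift_dstar h a = of_real (h (fst a) / sq (fst a))"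
  by (simp add: shift_dstar_def dstar_def)

lemma dstar_scale: "dstar (\<lambda>z. c * h z) = (\<lambda>a. of_real c * dstar h a)"
  by (rule ext) (simp add: dstar_def)

lemma shift_dstar_scale: "shift_dstar (\<lambda>z. c * h z) = (\<lambda>a. of_real c * shift_dstar h a)"
  by (rule ext) (simp add: shift_dstar_def dstar_scale)

lemma shift_eq: "shift a c = (if c = prod.swap a then 1 else 0)"
  unfolding shift_def by auto

lemma discr_eq: "discr V E v u = (if (u, v) \<in> A then 1 / (sq v * sq u) else 0)"
proof -
  have "discr V E v u = (\<Sum>a\<in>A. bdry V E v a * bdry V E u (prod.swap a))"
    unfolding discr_def shift_eq using finite_arcs
    by (intro sum.cong refl) (simp add: if_distrib[of "\<lambda>t. _ * t * _"] sum.delta' cong: if_cong)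
  also have "\<dots> = (\<Sum>a\<in>A. if a = (u, v) then 1 / (sq v * sq u) else 0)"
    by (intro sum.cong refl) (auto simp: bdry_def)
  finally show ?thesis using finite_arcs by simp
qed

lemma Pact_eq:
  assumes "v \<in> V"
  shows "Pact V E h v = (\<Sum>u\<in>V. if E u v then h u / sq u else 0) / sq v"
  unfolding Pact_def sum_divide_distrib using assms
  by (auto simp: discr_eq arcs_def intro!: sum.cong)

lemma Umat_eq:
  assumes "a \<in> A"
  shows "Umat V E a b =
    2 * (if snd b = fst a then 1 / dg (fst a) else 0) - (if b = prod.swap a then 1 else 0)"
proof -
  have "fst a \<in> V" using assms arcs_iff by simp
  have "Umat V E a b = (\<Sum>c\<in>A. if c = prod.swap a then
      2 * (\<Sum>z\<in>V. bdry V E z c * bdry V E z b) - (if c = b then 1 else 0) else 0)"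
    unfolding Umat_def shift_eq by (intro sum.cong refl) auto
  also have "\<dots> = 2 * (\<Sum>z\<in>V. bdry V E z (prod.swap a) * bdry V E z b)
      - (if prod.swap a = b then 1 else 0)"
    using assms finite_arcs by (simp add: sum.delta')
  also have "(\<Sum>z\<in>V. bdry V E z (prod.swap a) * bdry V E z b) = bdry V E (fst a) b / sq (fst a)"
    using \<open>fst a \<in> V\<close> finite_V by (simp add: bdry_def if_distrib[of "\<lambda>t. t * _"] cong: if_cong)
  also have "\<dots> = (if snd b = fst a then 1 / dg (fst a) else 0)"
    by (auto simp: bdry_def)
  finally show ?thesis by auto
qed

lemma Umat_swap:
  assumes "a \<in> A" and "b \<in> A"
  shows "Umat V E (prod.swap b) (prod.swap a) = Umat V E a b"
  using assms by (auto simp: Umat_eq)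

lemma Uact_eq:
  assumes "a \<in> A"
  shows "Uact V E f a = of_real (2 / dg (fst a)) * (\<Sum>u\<in>V. if E u (fst a) then f (u, fst a) else 0)
    - f (prod.swap a)"
proof -
  have "fst a \<in> V" using assms arcs_iff by simp
  have "Uact V E f a = (\<Sum>b\<in>A. of_real (2 / dg (fst a)) * (if snd b = fst a then f b else 0)
      - (if b = prod.swap a then f b else 0))"
    unfolding Uact_def if_P[OF assms] Umat_eq[OF assms]
    by (intro sum.cong refl) (auto simp: algebra_simps)
  also have "\<dots> =
      of_real (2 / dg (fst a)) * (\<Sum>b\<in>A. if snd b = fst a then f b else 0) - f (prod.swap a)"
    using assms finite_arcs by (simp add: sum_subtractf sum_distrib_left sum.delta')
  also have "(\<Sum>b\<in>A. if snd b = fst a then f b else 0)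
      = (\<Sum>u\<in>V. if E u (fst a) then f (u, fst a) else 0)"
    unfolding sum_arcs using \<open>fst a \<in> V\<close> finite_V
    by (intro sum.cong refl)
       (simp add: if_distrib[of "\<lambda>t. if E _ _ then t else 0"] sum.delta' cong: if_cong)
  finally show ?thesis .
qed

lemma Uact_dstar: "Uact V E (dstar h) = shift_dstar h"
proof
  fix a
  show "Uact V E (dstar h) a = shift_dstar h a"
  proof (cases "a \<in> A")
    case True
    define c :: complex where "c = of_real (h (fst a) / sq (fst a))"
    have "dg (fst a) > 0" using True deg_pos[of "snd a" "fst a"] E_sym by (simp add: arcs_iff)
    have "(\<Sum>u\<in>V. if E u (fst a) then dstar h (u, fst a) else 0)
        = (\<Sum>u\<in>V. if E u (fst a) then c else 0)"
      by (intro sum.cong refl) (auto simp: c_def dstar_def arcs_def dest: E_in_V)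
    also have "\<dots> = of_real (dg (fst a)) * c"
      by (simp add: sum_in_neighbours_const)
    finally have
      "of_real (2 / dg (fst a)) * (\<Sum>u\<in>V. if E u (fst a) then dstar h (u, fst a) else 0) = 2 * c"
      using \<open>dg (fst a) > 0\<close> by simp
    moreover have "dstar h (prod.swap a) = c" "shift_dstar h a = c"
      using True by (simp_all add: c_def dstar_def shift_dstar_apply)
    ultimately show ?thesis
      unfolding Uact_eq[OF True] by simp
  qed (simp add: Uact_def shift_dstar_def dstar_def)
qed

lemma Uact_shift_dstar:
  "Uact V E (shift_dstar h) = (\<lambda>a. 2 * shift_dstar (Pact V E h) a - dstar h a)"
proof
  fix a
  show "Uact V E (shift_dstar h) a = 2 * shift_dstar (Pact V E h) a - dstar h a"
  proof (cases "a \<in> A")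
    case True
    define S where "S = (\<Sum>u\<in>V. if E u (fst a) then h u / sq u else 0)"
    have "fst a \<in> V" using True by (simp add: arcs_iff)
    have sum_eq: "(\<Sum>u\<in>V. if E u (fst a) then shift_dstar h (u, fst a) else 0) = of_real S"
      unfolding S_def of_real_sum using \<open>fst a \<in> V\<close>
      by (intro sum.cong refl) (auto simp: shift_dstar_apply arcs_def dest: E_in_V)
    have "2 / dg (fst a) * S = 2 * (Pact V E h (fst a) / sq (fst a))"
      by (simp add: Pact_eq[OF \<open>fst a \<in> V\<close>] S_def)
    then have coeff_eq: "of_real (2 / dg (fst a)) * of_real S = 2 * shift_dstar (Pact V E h) a"
      unfolding shift_dstar_apply[OF True] of_real_mult[symmetric] by simp
    show ?thesis
      unfolding Uact_eq[OF True] sum_eq coeff_eq by (simp add: shift_dstar_def)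
  qed (simp add: Uact_def shift_dstar_def dstar_def)
qed

lemma Uadj_eq_swap: "Uadj g b = Uact V E (\<lambda>a. g (prod.swap a)) (prod.swap b)"
proof (cases "b \<in> A")
  case True
  have "(\<Sum>a\<in>A. of_real (Umat V E a b) * g a)
      = (\<Sum>c\<in>A. of_real (Umat V E (prod.swap b) c) * g (prod.swap c))"
    by (rule sum.reindex_bij_witness[where i = prod.swap and j = prod.swap])
       (auto simp: Umat_swap True)
  then show ?thesis using True by (simp add: Uadj_def Uact_def)
qed (simp add: Uadj_def Uact_def)

lemma Uadj_shift_dstar: "Uadj (shift_dstar h) = dstar h"
  by (rule ext) (simp add: Uadj_eq_swap shift_dstar_def Uact_dstar)

lemma Uadj_dstar: "Uadj (dstar h) = (\<lambda>a. 2 * dstar (Pact V E h) a - shift_dstar h a)"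
proof
  fix b
  have "Uadj (dstar h) b = Uact V E (shift_dstar h) (prod.swap b)"
    unfolding Uadj_eq_swap shift_dstar_def ..
  also have "\<dots> = 2 * dstar (Pact V E h) b - shift_dstar h b"
    unfolding Uact_shift_dstar by (simp add: shift_dstar_def)
  finally show "Uadj (dstar h) b = 2 * dstar (Pact V E h) b - shift_dstar h b" .
qed

lemma Uact_lincomb: "Uact V E (\<lambda>e. c * f e + d * g e) = (\<lambda>e. c * Uact V E f e + d * Uact V E g e)"
  unfolding Uact_def by (rule ext) (simp add: sum.distrib sum_distrib_left algebra_simps)

lemma Uadj_lincomb: "Uadj (\<lambda>e. c * f e + d * g e) = (\<lambda>e. c * Uadj f e + d * Uadj g e)"
  unfolding Uadj_def by (rule ext) (simp add: sum.distrib sum_distrib_left algebra_simps)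

lemma arc_inner_lincomb_left:
  "arc_inner (\<lambda>e. c * f e + d * g e) h = c * arc_inner f h + d * arc_inner g h"
  unfolding arc_inner_def by (simp add: sum.distrib sum_distrib_left algebra_simps)

lemma arc_inner_lincomb_right:
  "arc_inner h (\<lambda>e. c * f e + d * g e) = cnj c * arc_inner h f + cnj d * arc_inner h g"
  unfolding arc_inner_def by (simp add: sum.distrib sum_distrib_left algebra_simps)

lemma arc_inner_scale_left: "arc_inner (\<lambda>e. c * f e) h = c * arc_inner f h"
  unfolding arc_inner_def by (simp add: sum_distrib_left mult.assoc)

lemma arc_inner_Uact: "arc_inner (Uact V E f) g = arc_inner f (Uadj g)"
proof -
  have "arc_inner (Uact V E f) g = (\<Sum>a\<in>A. \<Sum>b\<in>A. of_real (Umat V E a b) * f b * cnj (g a))"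
    unfolding arc_inner_def Uact_def by (simp add: sum_distrib_right)
  also have "\<dots> = arc_inner f (Uadj g)"
    unfolding arc_inner_def Uadj_def by (subst sum.swap) (simp add: sum_distrib_left mult_ac)
  finally show ?thesis .
qed

lemma arc_inner_funpow_Uact: "arc_inner ((Uact V E ^^ k) f) g = arc_inner f ((Uadj ^^ k) g)"
proof (induction k arbitrary: g)
  case (Suc k)
  have "arc_inner ((Uact V E ^^ Suc k) f) g = arc_inner ((Uact V E ^^ k) f) (Uadj g)"
    by (simp add: arc_inner_Uact)
  then show ?case by (simp add: Suc.IH funpow_swap1)
qed simp

lemma arc_inner_swap: "arc_inner f g = arc_inner (\<lambda>a. f (prod.swap a)) (\<lambda>a. g (prod.swap a))"
  unfolding arc_inner_def
  by (rule sum.reindex_bij_witness[where i = prod.swap and j = prod.swap]) auto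

lemma arc_inner_shift_dstar:
  "arc_inner (shift_dstar f) (shift_dstar g) = arc_inner (dstar f) (dstar g)"
  by (subst arc_inner_swap) (simp add: shift_dstar_def)

lemma arc_inner_shift_dstar_dstar:
  "arc_inner (shift_dstar f) (dstar g) = arc_inner (dstar f) (shift_dstar g)"
  by (subst arc_inner_swap) (simp add: shift_dstar_def)

lemma arc_inner_dstar:
  assumes "\<And>v. v \<in> V \<Longrightarrow> deg V E v = 0 \<Longrightarrow> g v = 0"
  shows "arc_inner (dstar f) (dstar g) = of_real (vinner V f g)"
proof -
  have "arc_inner (dstar f) (dstar g)
      = of_real (\<Sum>a\<in>A. f (snd a) / sq (snd a) * (g (snd a) / sq (snd a)))"
    unfolding arc_inner_def of_real_sum
    by (intro sum.cong refl) (simp add: dstar_def del: of_real_divide flip: of_real_mult)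
  also have "(\<Sum>a\<in>A. f (snd a) / sq (snd a) * (g (snd a) / sq (snd a)))
      = (\<Sum>u\<in>V. \<Sum>v\<in>V. if E u v then f v / sq v * (g v / sq v) else 0)"
    by (simp add: sum_arcs cong: if_cong)
  also have "\<dots> = (\<Sum>v\<in>V. \<Sum>u\<in>V. if E u v then f v / sq v * (g v / sq v) else 0)"
    by (rule sum.swap)
  also have "\<dots> = vinner V f g"
    unfolding vinner_def sum_in_neighbours_const using assms by (intro sum.cong refl) auto
  finally show ?thesis .
qed

lemma arc_inner_dstar_shift_dstar:
  "arc_inner (dstar f) (shift_dstar g) = of_real (vinner V f (Pact V E g))"
proof -
  have "arc_inner (dstar f) (shift_dstar g)
      = of_real (\<Sum>a\<in>A. f (snd a) * g (fst a) / (sq (snd a) * sq (fst a)))"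
    unfolding arc_inner_def of_real_sum
    by (intro sum.cong refl) (simp add: dstar_def shift_dstar_apply)
  also have "(\<Sum>a\<in>A. f (snd a) * g (fst a) / (sq (snd a) * sq (fst a)))
      = (\<Sum>u\<in>V. \<Sum>v\<in>V. if E u v then f v * g u / (sq v * sq u) else 0)"
    by (simp add: sum_arcs cong: if_cong)
  also have "\<dots> = (\<Sum>v\<in>V. \<Sum>u\<in>V. if E u v then f v * g u / (sq v * sq u) else 0)"
    by (rule sum.swap)
  also have "\<dots> = vinner V f (Pact V E g)"
    unfolding vinner_def
    by (intro sum.cong refl) (auto simp: Pact_eq sum_divide_distrib sum_distrib_left mult.commute
        intro!: sum.cong)
  finally show ?thesis .
qed

end

locale grover_eigvec = grover_walk V E for V :: "'v set" and E +
  fixes \<mu> :: real and w :: "'v \<Rightarrow> real"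
  assumes eigvec: "w \<in> eigsp V E \<mu>" and eigvec_nonzero: "w \<noteq> (\<lambda>_. 0)" and eigval_nonzero: "\<mu> \<noteq> 0"
begin

lemma Pact_eigvec: "Pact V E w = (\<lambda>z. \<mu> * w z)" and eigvec_outside: "z \<notin> V \<Longrightarrow> w z = 0"
  using eigvec by (auto simp: eigsp_def)

lemma eigvec_isolated:
  assumes "v \<in> V" and "deg V E v = 0"
  shows "w v = 0"
proof -
  have "\<not> E u v" for u using deg_pos[of u v] assms(2) by auto
  then have "Pact V E w v = 0" by (simp add: Pact_eq[OF assms(1)])
  then have "\<mu> * w v = 0" by (simp add: Pact_eigvec)
  then show ?thesis using eigval_nonzero by simp
qed

lemma arc_inner_eigvec:
  "arc_inner (dstar f) (dstar w) = of_real (vinner V f w)"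
  "arc_inner (dstar f) (shift_dstar w) = of_real \<mu> * of_real (vinner V f w)"
  "arc_inner (shift_dstar w) (dstar w) = of_real \<mu> * of_real (vinner V w w)"
  "arc_inner (shift_dstar w) (shift_dstar w) = of_real (vinner V w w)"
proof -
  show dstar_dstar: "arc_inner (dstar f) (dstar w) = of_real (vinner V f w)" for f
    using arc_inner_dstar eigvec_isolated by blast
  show dstar_shift: "arc_inner (dstar f) (shift_dstar w) = of_real \<mu> * of_real (vinner V f w)" for f
    by (simp add: arc_inner_dstar_shift_dstar Pact_eigvec vinner_scale_right)
  show "arc_inner (shift_dstar w) (dstar w) = of_real \<mu> * of_real (vinner V w w)"
    using dstar_shift[of w] by (simp add: arc_inner_shift_dstar_dstar)
  show "arc_inner (shift_dstar w) (shift_dstar w) = of_real (vinner V w w)"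
    using dstar_dstar[of w] by (simp add: arc_inner_shift_dstar)
qed

lemma Uact_shift_dstar_eigvec:
  "Uact V E (shift_dstar w) = (\<lambda>e. (- 1) * dstar w e + (2 * of_real \<mu>) * shift_dstar w e)"
  by (simp add: Uact_shift_dstar Pact_eigvec shift_dstar_scale mult.assoc)

lemma Uadj_dstar_eigvec:
  "Uadj (dstar w) = (\<lambda>e. (2 * of_real \<mu>) * dstar w e + (- 1) * shift_dstar w e)"
  by (simp add: Uadj_dstar Pact_eigvec dstar_scale mult.assoc)

lemma arc_inner_span_residual:
  "arc_inner (\<lambda>e. c * dstar w e + d * shift_dstar w e)
      (\<lambda>e. (- of_real \<mu>) * dstar w e + 1 * shift_dstar w e)
    = d * (of_real (vinner V w w) * (1 - of_real \<mu> * of_real \<mu>))"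
  unfolding arc_inner_lincomb_left arc_inner_lincomb_right arc_inner_eigvec
  by (simp add: algebra_simps)

lemma residual_factor_nonzero:
  assumes "\<mu> * \<mu> \<noteq> 1"
  shows "complex_of_real (vinner V w w) * (1 - of_real \<mu> * of_real \<mu>) \<noteq> 0"
proof -
  have "vinner V w w \<noteq> 0"
    using vinner_self_pos[OF finite_V eigvec_outside eigvec_nonzero] by simp
  moreover have "1 - complex_of_real \<mu> * of_real \<mu> \<noteq> 0"
    using assms by (metis eq_iff_diff_eq_0 of_real_eq_1_iff of_real_mult)
  ultimately show ?thesis by simp
qed

lemma dstar_shift_dstar_independent:
  assumes "\<mu> * \<mu> \<noteq> 1" and "(\<lambda>e. c * dstar w e + d * shift_dstar w e) = (\<lambda>_. 0)"
  shows "c = 0 \<and> d = 0"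
proof -
  have "d * (of_real (vinner V w w) * (1 - of_real \<mu> * of_real \<mu>)) = 0"
    using arc_inner_span_residual[of c d] unfolding assms(2) by (simp add: arc_inner_def)
  then have "d = 0" using residual_factor_nonzero[OF assms(1)] by simp
  moreover have "arc_inner (\<lambda>e. c * dstar w e + d * shift_dstar w e) (dstar w) = 0"
    unfolding assms(2) by (simp add: arc_inner_def)
  then have "c * of_real (vinner V w w) + d * (of_real \<mu> * of_real (vinner V w w)) = 0"
    unfolding arc_inner_lincomb_left arc_inner_eigvec .
  ultimately show ?thesis
    using vinner_self_pos[OF finite_V eigvec_outside eigvec_nonzero] by simp
qed

lemma arc_inner_dstar_residual:
  "arc_inner (dstar f) (\<lambda>e. (- of_real \<mu>) * dstar w e + 1 * shift_dstar w e) = 0"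
  unfolding arc_inner_lincomb_right arc_inner_eigvec by simp

lemma arc_inner_dstar_evec_eq_projection:
  assumes "x \<in> V" and "vinner V (\<lambda>z. evec x z - w z) w = 0"
  shows "arc_inner (dstar (evec x)) (\<lambda>e. p * dstar w e + q * shift_dstar w e)
    = arc_inner (dstar w) (\<lambda>e. p * dstar w e + q * shift_dstar w e)"
proof -
  have "w x = vinner V w w"
    using assms(2) by (simp add: vinner_diff_left vinner_evec[OF finite_V assms(1)])
  then show ?thesis
    unfolding arc_inner_lincomb_right arc_inner_eigvec vinner_evec[OF finite_V assms(1)] by simp
qed

text \<open>\<open>U\<^sup>*\<close> keeps the residual \<open>H = R d\<^sup>* w - \<mu> d\<^sup>* w\<close> in
  \<open>span {d\<^sup>* w, R d\<^sup>* w}\<close>, where \<open>d\<^sup>* e\<^sub>x\<close> and \<open>d\<^sup>* w\<close> are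
  indistinguishable; so \<open>U\<^sup>\<tau> d\<^sup>* w\<close> is orthogonal to \<open>H\<close> just as
  \<open>U\<^sup>\<tau> d\<^sup>* e\<^sub>x = \<gamma> d\<^sup>* e\<^sub>y\<close> is, which rules out an \<open>R d\<^sup>* w\<close>-component.\<close>
lemma pst_scalar_on_eigvec:
  assumes "x \<in> V" and proj: "vinner V (\<lambda>z. evec x z - w z) w = 0" and "\<mu> * \<mu> \<noteq> 1"
    and pst: "(Uact V E ^^ \<tau>) (dstar (evec x)) = (\<lambda>a. \<gamma> * dstar (evec y) a)"
  shows "\<exists>a. (Uact V E ^^ \<tau>) (dstar w) = (\<lambda>e. a * dstar w e)"
proof -
  define H where "H = (\<lambda>e. (- of_real \<mu>) * dstar w e + 1 * shift_dstar w e)"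
  have "Uadj (shift_dstar w) = (\<lambda>e. 1 * dstar w e + 0 * shift_dstar w e)"
    by (simp add: Uadj_shift_dstar)
  then obtain p q where "(Uadj ^^ \<tau>) H = (\<lambda>e. p * dstar w e + q * shift_dstar w e)"
    unfolding H_def using funpow_invariant_pair[OF Uadj_lincomb Uadj_dstar_eigvec] by blast
  then have "arc_inner ((Uact V E ^^ \<tau>) (dstar w)) H
      = arc_inner ((Uact V E ^^ \<tau>) (dstar (evec x))) H"
    by (simp only: arc_inner_funpow_Uact arc_inner_dstar_evec_eq_projection[OF \<open>x \<in> V\<close> proj])
  also have "\<dots> = 0"
    unfolding pst arc_inner_scale_left H_def arc_inner_dstar_residual by simp
  finally have orth: "arc_inner ((Uact V E ^^ \<tau>) (dstar w)) H = 0" .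
  have "Uact V E (dstar w) = (\<lambda>e. 0 * dstar w e + 1 * shift_dstar w e)"
    by (simp add: Uact_dstar)
  from funpow_invariant_pair[OF Uact_lincomb this Uact_shift_dstar_eigvec, of \<tau> 1 0]
  obtain a b where ab: "(Uact V E ^^ \<tau>) (dstar w) = (\<lambda>e. a * dstar w e + b * shift_dstar w e)"
    by auto
  have "b = 0"
    using orth residual_factor_nonzero[OF \<open>\<mu> * \<mu> \<noteq> 1\<close>]
    unfolding ab H_def arc_inner_span_residual by simp
  then show ?thesis using ab by auto
qed

lemma pst_root_of_unity:
  assumes "x \<in> V" and "vinner V (\<lambda>z. evec x z - w z) w = 0" and "\<mu> * \<mu> \<noteq> 1"
    and "(Uact V E ^^ \<tau>) (dstar (evec x)) = (\<lambda>a. \<gamma> * dstar (evec y) a)"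
  obtains z :: complex where "z + inverse z = 2 * of_real \<mu>" and "z ^ (2 * \<tau>) = 1"
proof -
  obtain a where scalar: "(Uact V E ^^ \<tau>) (dstar w) = (\<lambda>e. a * dstar w e)"
    using pst_scalar_on_eigvec[OF assms] by blast
  have indep: "c = 0 \<and> d = 0" if "(\<lambda>e. c * dstar w e + d * shift_dstar w e) = (\<lambda>_. 0)" for c d
    using dstar_shift_dstar_independent[OF assms(3) that] .
  show thesis
    by (rule invariant_pair_root_of_unity[OF Uact_lincomb Uact_dstar Uact_shift_dstar_eigvec indep
          scalar that])
qed

end

theorem lemma9p1:
  fixes V :: "'v set" and E :: "'v \<Rightarrow> 'v \<Rightarrow> bool" and x y :: 'v and \<tau> :: nat
  assumes "simple_graph V E" and "x \<in> V" and "y \<in> V"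
    and "pst V E (dstar_e V E x) (dstar_e V E y) \<tau>"
  shows "\<forall>\<mu>\<in>Theta V E x. algebraic_int (2 * \<mu>)"
proof
  fix \<mu> assume "\<mu> \<in> Theta V E x"
  interpret grover_walk V E by unfold_locales (rule assms(1))
  show "algebraic_int (2 * \<mu>)"
  proof (cases "\<mu> = 0 \<or> \<mu> * \<mu> = 1")
    case True
    then have "\<mu> = 0 \<or> \<mu> = 1 \<or> \<mu> = - 1" using square_eq_1_iff by blast
    then show ?thesis by auto
  next
    case False
    then have "\<mu> \<noteq> 0" and "\<mu> * \<mu> \<noteq> 1" by auto
    define w where "w = eigproj V E \<mu> (evec x)"
    interpret grover_eigvec V E \<mu> w
      using eigproj_spec(1)[OF finite_V] \<open>\<mu> \<in> Theta V E x\<close> \<open>\<mu> \<noteq> 0\<close>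
      by unfold_locales (simp_all add: w_def Theta_def)
    have proj: "vinner V (\<lambda>z. evec x z - w z) w = 0"
      using eigproj_spec(2)[OF finite_V] eigvec unfolding w_def by blast
    obtain \<gamma> where "\<tau> \<ge> 1"
      and pst: "(Uact V E ^^ \<tau>) (dstar (evec x)) = (\<lambda>a. \<gamma> * dstar (evec y) a)"
      using assms(4) by (auto simp: pst_def dstar_e_eq)
    obtain z :: complex where "z + inverse z = 2 * of_real \<mu>" and "z ^ (2 * \<tau>) = 1"
      by (rule pst_root_of_unity[OF assms(2) proj \<open>\<mu> * \<mu> \<noteq> 1\<close> pst])
    then have "algebraic_int (complex_of_real (2 * \<mu>))"
      using algebraic_int_add_inverse_root_of_unity[of z "2 * \<tau>"] \<open>\<tau> \<ge> 1\<close> by simp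
    then show ?thesis by (simp only: algebraic_int_of_real_iff)
  qed
qed

end
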